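(* Let $\mathcal{C}=\{(a_i,b_i,y_i)\}_{i=1}^{|\mathcal{C}|}$ be a set of constraints, $\omega>0$, and let embeddings $\boldsymbol{z}_j\in\mathbb{R}^D\setminus\{\mathbf 0\}$ satisfy $\mathcal{L}_{\mathrm{ang}}\le\varepsilon$ for some $\varepsilon>0$. Then: (i) for each positive constraint $(a_i,b_i,1)\in\mathcal{C}$, $0\le\theta_{\boldsymbol{z}_{a_i},\boldsymbol{z}_{b_i}}\le\Delta^+(\varepsilon):=\arccos\big(2e^{-|\mathcal{C}|\varepsilon}-1\big)$, and $\Delta^+(\varepsilon)\approx 2\sqrt{|\mathcal{C}|\varepsilon}$ as $\varepsilon\to0$; (ii) for each negative constraint $(a_i,b_i,0)\in\mathcal{C}$ with $\theta_{\boldsymbol{z}_{a_i},\boldsymbol{z}_{b_i}}\le\pi/\omega$, $0\le\frac{\pi}{\omega}-\theta_{\boldsymbol{z}_{a_i},\boldsymbol{z}_{b_i}}\le\Delta^-(\varepsilon):=\frac{1}{\omega}\arccos\big(2e^{-|\mathcal{C}|\varepsilon}-1\big)$, and $\Delta^-(\varepsilon)\approx 2\sqrt{|\mathcal{C}|\varepsilon}/\omega$ as $\varepsilon\to0$ (here $\approx$ means the ratio tends to $1$).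
   Context: For nonzero vectors, $\theta_{\boldsymbol{u},\boldsymbol{v}}\in[0,\pi]$ is the angle. The loss is $\mathcal{L}_{\mathrm{ang}}=-\frac{1}{|\mathcal{C}|}\sum_{i}\big(y_i\log \mathrm{Sim}(a_i,b_i)+(1-y_i)\log(1-\mathrm{Sim}(a_i,b_i))\big)$, with $\mathrm{Sim}(a_i,b_i)=\tfrac12(\cos\theta_{\boldsymbol{z}_{a_i},\boldsymbol{z}_{b_i}}+1)$ if $y_i=1$ and $\mathrm{Sim}(a_i,b_i)=\tfrac12(\cos(\min(\omega\theta_{\boldsymbol{z}_{a_i},\boldsymbol{z}_{b_i}},\pi))+1)$ if $y_i=0$. *)

theory Defs
  imports "HOL-Analysis.Analysis"
begin

definition vec_angle :: "'a::real_inner \<Rightarrow> 'a \<Rightarrow> real" where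
  "vec_angle u v = arccos (inner u v / (norm u * norm v))"

definition neglog :: "real \<Rightarrow> ereal" where
  "neglog x = (if x > 0 then ereal (- ln x) else \<infinity>)"

text \<open>Similarity of a constraint (a, b, y); y = True encodes y_i = 1, y = False encodes y_i = 0.\<close>
definition Sim :: "real \<Rightarrow> ('j \<Rightarrow> 'a::real_inner) \<Rightarrow> 'j \<Rightarrow> 'j \<Rightarrow> bool \<Rightarrow> real" where
  "Sim \<omega> z a b y =
     (if y then (cos (vec_angle (z a) (z b)) + 1) / 2
      else (cos (min (\<omega> * vec_angle (z a) (z b)) pi) + 1) / 2)"

text \<open>Per-constraint term of the binary cross-entropy:
  -(y log Sim + (1-y) log(1 - Sim)).\<close>
definition ang_term :: "real \<Rightarrow> ('j \<Rightarrow> 'a::real_inner) \<Rightarrow> 'j \<times> 'j \<times> bool \<Rightarrow> ereal" where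
  "ang_term \<omega> z c = (case c of (a, b, y) \<Rightarrow>
     (if y then neglog (Sim \<omega> z a b y) else neglog (1 - Sim \<omega> z a b y)))"

definition L_ang :: "real \<Rightarrow> ('j \<Rightarrow> 'a::real_inner) \<Rightarrow> ('j \<times> 'j \<times> bool) list \<Rightarrow> ereal" where
  "L_ang \<omega> z C = ereal (1 / real (length C)) * (\<Sum>i<length C. ang_term \<omega> z (C ! i))"

definition Delta_plus :: "nat \<Rightarrow> real \<Rightarrow> real" where
  "Delta_plus m \<epsilon> = arccos (2 * exp (- real m * \<epsilon>) - 1)"

definition Delta_minus :: "real \<Rightarrow> nat \<Rightarrow> real \<Rightarrow> real" where
  "Delta_minus \<omega> m \<epsilon> = (1 / \<omega>) * arccos (2 * exp (- real m * \<epsilon>) - 1)"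

end

theory Submission
  imports Defs "HOL-Real_Asymp.Real_Asymp"
begin

text \<open>All terms of the loss are nonnegative, so each is at most \<open>|C| \<epsilon>\<close>. A bound
  \<open>-ln ((1 + cos \<phi>) / 2) \<le> t\<close> with \<open>0 \<le> \<phi> \<le> \<pi>\<close> means
  \<open>cos \<phi> \<ge> 2 exp (-t) - 1\<close>, i.e. \<open>\<phi> \<le> arccos (2 exp (-t) - 1)\<close>. For a positive
  constraint \<open>\<phi>\<close> is the angle \<open>\<theta>\<close>; for a negative one
  \<open>1 - (1 + cos (\<omega>\<theta>)) / 2 = (1 + cos (\<pi> - \<omega>\<theta>)) / 2\<close>, so \<open>\<phi> = \<pi> - \<omega>\<theta>\<close>.
  The asymptotics come from the half-angle identity
  \<open>arccos (2 exp (-s) - 1) = 2 arctan (sqrt (exp s - 1))\<close>, which is \<open>\<sim> 2 sqrt s\<close>.\<close>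

lemma vec_angle_bounds:
  fixes u v :: "'a::real_inner"
  shows "0 \<le> vec_angle u v \<and> vec_angle u v \<le> pi"
proof -
  define q where "q = inner u v / (norm u * norm v)"
  have "\<bar>inner u v\<bar> \<le> norm u * norm v"
    by (rule Cauchy_Schwarz_ineq2)
  then have "\<bar>q\<bar> \<le> 1"
    by (cases "norm u * norm v = 0") (simp_all add: q_def abs_divide divide_le_eq)
  then show ?thesis
    unfolding vec_angle_def q_def[symmetric] by (simp add: arccos_lbound arccos_ubound)
qed

lemma exp_neg_le_if_neglog_le:
  assumes "neglog x \<le> ereal t"
  shows "exp (- t) \<le> x"
proof -
  have "x > 0" and "- ln x \<le> t"
    using assms by (auto simp: neglog_def split: if_splits)
  then show ?thesis
    by (metis exp_le_cancel_iff exp_ln minus_le_iff)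
qed

lemma le_arccos_if_neglog_half_cos_plus_one_le:
  assumes "neglog ((cos \<phi> + 1) / 2) \<le> ereal t" and "0 \<le> \<phi>" and "\<phi> \<le> pi"
  shows "\<phi> \<le> arccos (2 * exp (- t) - 1)"
proof -
  have "2 * exp (- t) - 1 \<le> cos \<phi>"
    using exp_neg_le_if_neglog_le[OF assms(1)] by simp
  then have "arccos (cos \<phi>) \<le> arccos (2 * exp (- t) - 1)"
    by (intro arccos_le_arccos) (auto simp: add_increasing)
  then show ?thesis
    using arccos_cos[OF assms(2,3)] by simp
qed

lemma cos_plus_one_bounds:
  fixes x :: real
  shows "0 \<le> cos x + 1" "cos x + 1 \<le> 2"
  using cos_ge_minus_one[of x] cos_le_one[of x] by linarith+

lemma Sim_nonneg: "0 \<le> Sim \<omega> z a b y"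
  unfolding Sim_def using cos_plus_one_bounds by simp

lemma Sim_le_one: "Sim \<omega> z a b y \<le> 1"
  unfolding Sim_def using cos_plus_one_bounds by simp

lemma neglog_nonneg: "x \<le> 1 \<Longrightarrow> 0 \<le> neglog x"
  by (simp add: neglog_def)

lemma ang_term_nonneg: "0 \<le> ang_term \<omega> z c"
  using Sim_nonneg Sim_le_one unfolding ang_term_def
  by (auto split: prod.splits intro!: neglog_nonneg)

lemma ang_term_le_if_L_ang_le:
  assumes "L_ang \<omega> z C \<le> ereal \<epsilon>" and "i < length C"
  shows "ang_term \<omega> z (C ! i) \<le> ereal (real (length C) * \<epsilon>)"
proof -
  define S where "S = (\<Sum>k<length C. ang_term \<omega> z (C ! k))"
  have "length C > 0"
    using assms(2) by linarith
  then have m: "real (length C) > 0"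
    by simp
  have "ang_term \<omega> z (C ! i) = (\<Sum>k\<in>{i}. ang_term \<omega> z (C ! k))"
    by simp
  also have "\<dots> \<le> S"
    unfolding S_def using assms(2) by (intro sum_mono2 ang_term_nonneg) auto
  finally have term_le: "ang_term \<omega> z (C ! i) \<le> S" .
  have "0 \<le> S"
    unfolding S_def by (intro sum_nonneg ang_term_nonneg)
  moreover have L: "ereal (1 / real (length C)) * S \<le> ereal \<epsilon>"
    using assms(1) unfolding L_ang_def S_def .
  ultimately obtain s where s: "S = ereal s"
    using m by (cases S) auto
  have "s \<le> real (length C) * \<epsilon>"
    using L m by (simp add: s divide_le_eq mult.commute)
  then have "S \<le> ereal (real (length C) * \<epsilon>)"
    by (simp add: s)
  with term_le show ?thesis
    by (rule order_trans)
qed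

lemma positive_constraint_angle_le:
  assumes "ang_term \<omega> z (a, b, True) \<le> ereal t"
  shows "vec_angle (z a) (z b) \<le> arccos (2 * exp (- t) - 1)"
  using assms vec_angle_bounds
  by (intro le_arccos_if_neglog_half_cos_plus_one_le) (auto simp: ang_term_def Sim_def)

lemma negative_constraint_angle_gap_le:
  assumes "ang_term \<omega> z (a, b, False) \<le> ereal t"
    and "0 < \<omega>" and "vec_angle (z a) (z b) \<le> pi / \<omega>"
  shows "pi / \<omega> - vec_angle (z a) (z b) \<le> arccos (2 * exp (- t) - 1) / \<omega>"
proof -
  let ?x = "\<omega> * vec_angle (z a) (z b)"
  have x_le: "?x \<le> pi"
    using assms(2,3) by (simp add: field_simps)
  have flip: "1 - Sim \<omega> z a b False = (cos (pi - ?x) + 1) / 2"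
    using x_le by (simp add: Sim_def min_def field_simps)
  have "neglog (1 - Sim \<omega> z a b False) \<le> ereal t"
    using assms(1) by (simp add: ang_term_def)
  then have "neglog ((cos (pi - ?x) + 1) / 2) \<le> ereal t"
    by (simp only: flip)
  then have "pi - ?x \<le> arccos (2 * exp (- t) - 1)"
    using assms(2) x_le vec_angle_bounds[of "z a" "z b"]
    by (intro le_arccos_if_neglog_half_cos_plus_one_le) auto
  then have "(pi - ?x) / \<omega> \<le> arccos (2 * exp (- t) - 1) / \<omega>"
    using assms(2) by (simp add: divide_right_mono)
  moreover have "(pi - ?x) / \<omega> = pi / \<omega> - vec_angle (z a) (z b)"
    using assms(2) by (simp add: diff_divide_distrib)
  ultimately show ?thesis
    by simp
qed

lemma arccos_two_exp_minus_one_eq_arctan: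
  fixes s :: real
  assumes "0 \<le> s"
  shows "arccos (2 * exp (- s) - 1) = 2 * arctan (sqrt (exp s - 1))"
proof -
  define r where "r = sqrt (exp s - 1)"
  have "r\<^sup>2 = exp s - 1"
    using assms by (simp add: r_def)
  then have "(cos (arctan r))\<^sup>2 = exp (- s)"
    by (simp add: cos_arctan power_divide add_pos_nonneg exp_minus inverse_eq_divide)
  then have cos_eq: "cos (2 * arctan r) = 2 * exp (- s) - 1"
    by (simp add: cos_double_cos)
  have "0 \<le> arctan r" and "arctan r < pi / 2"
    using assms arctan_ubound by (simp_all add: r_def)
  then have "arccos (cos (2 * arctan r)) = 2 * arctan r"
    by (intro arccos_cos) auto
  then have "arccos (2 * exp (- s) - 1) = 2 * arctan r"
    by (simp only: cos_eq)
  then show ?thesis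
    by (simp only: r_def)
qed

lemma arccos_two_exp_minus_one_asymp:
  fixes m :: real
  assumes "0 < m"
  shows "((\<lambda>e. arccos (2 * exp (- m * e) - 1) / (2 * sqrt (m * e))) \<longlongrightarrow> 1) (at_right 0)"
proof -
  have "((\<lambda>e. 2 * arctan (sqrt (exp (m * e) - 1)) / (2 * sqrt (m * e))) \<longlongrightarrow> 1) (at_right 0)"
    using assms by real_asymp
  moreover have "\<forall>\<^sub>F e in at_right 0. 2 * arctan (sqrt (exp (m * e) - 1)) / (2 * sqrt (m * e))
      = arccos (2 * exp (- m * e) - 1) / (2 * sqrt (m * e))"
    using eventually_at_right_less[of "0::real"]
    by eventually_elim (use assms arccos_two_exp_minus_one_eq_arctan[of "m * _"] in simp)
  ultimately show ?thesis
    by (rule Lim_transform_eventually)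
qed

lemma Delta_plus_asymp:
  assumes "0 < m"
  shows "((\<lambda>e. Delta_plus m e / (2 * sqrt (real m * e))) \<longlongrightarrow> 1) (at_right 0)"
  using arccos_two_exp_minus_one_asymp[of "real m"] assms by (simp add: Delta_plus_def)

lemma Delta_minus_eq: "Delta_minus \<omega> m e = Delta_plus m e / \<omega>"
  by (simp add: Delta_minus_def Delta_plus_def)

theorem corollary1:
  fixes C :: "('j \<times> 'j \<times> bool) list"
    and z :: "'j \<Rightarrow> real ^ 'd"
    and \<omega> \<epsilon> :: real
  assumes "\<omega> > 0"
    and "\<epsilon> > 0"
    and "\<forall>j. z j \<noteq> 0"
    and "L_ang \<omega> z C \<le> ereal \<epsilon>"
  shows "(\<forall>i < length C. \<forall>a b. C ! i = (a, b, True) \<longrightarrow>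
            0 \<le> vec_angle (z a) (z b)
          \<and> vec_angle (z a) (z b) \<le> Delta_plus (length C) \<epsilon>
          \<and> ((\<lambda>e. Delta_plus (length C) e / (2 * sqrt (real (length C) * e))) \<longlongrightarrow> 1)
              (at_right 0))
       \<and> (\<forall>i < length C. \<forall>a b. C ! i = (a, b, False) \<longrightarrow> vec_angle (z a) (z b) \<le> pi / \<omega> \<longrightarrow>
            0 \<le> pi / \<omega> - vec_angle (z a) (z b)
          \<and> pi / \<omega> - vec_angle (z a) (z b) \<le> Delta_minus \<omega> (length C) \<epsilon>
          \<and> ((\<lambda>e. Delta_minus \<omega> (length C) e / (2 * sqrt (real (length C) * e) / \<omega>)) \<longlongrightarrow> 1)
              (at_right 0))"
proof (intro conjI allI impI)
  fix i a b
  assume i: "i < length C"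
  have term_le: "ang_term \<omega> z (C ! i) \<le> ereal (real (length C) * \<epsilon>)"
    by (rule ang_term_le_if_L_ang_le[OF assms(4) i])
  have asymp: "((\<lambda>e. Delta_plus (length C) e / (2 * sqrt (real (length C) * e))) \<longlongrightarrow> 1) (at_right 0)"
    using i by (intro Delta_plus_asymp) linarith
  {
    assume "C ! i = (a, b, True)"
    then show "0 \<le> vec_angle (z a) (z b)" and "vec_angle (z a) (z b) \<le> Delta_plus (length C) \<epsilon>"
      using vec_angle_bounds positive_constraint_angle_le term_le by (auto simp: Delta_plus_def)
    show "((\<lambda>e. Delta_plus (length C) e / (2 * sqrt (real (length C) * e))) \<longlongrightarrow> 1) (at_right 0)"
      by (fact asymp)
  next
    assume "C ! i = (a, b, False)" and small: "vec_angle (z a) (z b) \<le> pi / \<omega>"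
    then have "ang_term \<omega> z (a, b, False) \<le> ereal (real (length C) * \<epsilon>)"
      using term_le by simp
    then show "pi / \<omega> - vec_angle (z a) (z b) \<le> Delta_minus \<omega> (length C) \<epsilon>"
      using negative_constraint_angle_gap_le assms(1) small
      by (simp add: Delta_minus_eq Delta_plus_def)
    show "0 \<le> pi / \<omega> - vec_angle (z a) (z b)"
      using small by simp
    show "((\<lambda>e. Delta_minus \<omega> (length C) e / (2 * sqrt (real (length C) * e) / \<omega>)) \<longlongrightarrow> 1)
        (at_right 0)"
      using asymp assms(1) by (simp add: Delta_minus_eq)
  }
qed

end
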